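(* Let $n\ge1$ and let $\mathcal{S}$ be a discrete subgroup of $O(n+1)$ satisfying the spanning property. For any $\Omega\in\mathcal{K}_0(\mathcal{S})$ that is not a polytope, there exists an $\mathcal{S}$-invariant polytope $P\supset\Omega$ such that $\mathcal{F}_{-\infty}(\Omega)<\mathcal{F}_{-\infty}(P)$.
   Context: $\mathcal{K}_0(\mathcal{S})$: convex bodies in $\mathbb{R}^{n+1}$ containing the origin and invariant under all $\phi\in\mathcal{S}$. $\mathcal{F}_{-\infty}(\Omega)=V(\Omega)/(\min_{\mathbb{S}^n}h_\Omega)^{n+1}$, $h_\Omega$ the support function, $V(\Omega)=(n+1)|\Omega|$. Spanning property: for every $a\in\mathbb{S}^n$, $\mathrm{conv}\{\phi(a):\phi\in\mathcal{S}\}$ is a non-degenerate $(n+1)$-dimensional polytope. *)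

theory Defs
  imports "HOL-Analysis.Analysis"
begin

definition orth_subgroup :: "('a::euclidean_space \<Rightarrow> 'a) set \<Rightarrow> bool" where
  "orth_subgroup S \<longleftrightarrow> (\<forall>\<phi>\<in>S. orthogonal_transformation \<phi>) \<and> id \<in> S \<and>
     (\<forall>\<phi>\<in>S. \<forall>\<psi>\<in>S. \<phi> \<circ> \<psi> \<in> S) \<and> (\<forall>\<phi>\<in>S. inv \<phi> \<in> S)"

definition discrete_maps :: "('a::euclidean_space \<Rightarrow> 'a) set \<Rightarrow> bool" where
  "discrete_maps S \<longleftrightarrow> (\<forall>\<phi>\<in>S. \<exists>e>0. \<forall>\<psi>\<in>S. onorm (\<lambda>x. \<psi> x - \<phi> x) < e \<longrightarrow> \<psi> = \<phi>)"

definition spanning_property :: "('a::euclidean_space \<Rightarrow> 'a) set \<Rightarrow> bool" where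
  "spanning_property S \<longleftrightarrow> (\<forall>a. norm a = 1 \<longrightarrow>
      polytope (convex hull {\<phi> a |\<phi>. \<phi> \<in> S}) \<and>
      aff_dim (convex hull {\<phi> a |\<phi>. \<phi> \<in> S}) = int DIM('a))"

definition convex_body :: "'a::euclidean_space set \<Rightarrow> bool" where
  "convex_body K \<longleftrightarrow> compact K \<and> convex K \<and> interior K \<noteq> {}"

definition invariant_under :: "('a \<Rightarrow> 'a) set \<Rightarrow> 'a set \<Rightarrow> bool" where
  "invariant_under S K \<longleftrightarrow> (\<forall>\<phi>\<in>S. \<phi> ` K = K)"

definition K0 :: "('a::euclidean_space \<Rightarrow> 'a) set \<Rightarrow> 'a set set" where
  "K0 S = {K. convex_body K \<and> 0 \<in> K \<and> invariant_under S K}"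

definition support_fun :: "'a::euclidean_space set \<Rightarrow> 'a \<Rightarrow> real" where
  "support_fun K u = (SUP x\<in>K. x \<bullet> u)"

text \<open>V(K) = (n+1)|K| where n+1 = DIM('a).\<close>
definition Vol :: "'a::euclidean_space set \<Rightarrow> real" where
  "Vol K = real DIM('a) * measure lebesgue K"

definition F_minf :: "'a::euclidean_space set \<Rightarrow> real" where
  "F_minf K = Vol K / (INF u\<in>sphere (0::'a) 1. support_fun K u) ^ DIM('a)"

end

theory Submission
  imports Defs
begin

text \<open>
  Let \<open>a\<close> be a unit vector at which \<open>h\<^sub>\<Omega>\<close> attains its minimum \<open>r\<close> on the sphere. The spanning
  property makes the orbit \<open>\<S>a\<close> a finite set whose convex hull has \<open>0\<close> in its interior: \<open>0\<close> is
  its barycenter, because the barycenter is fixed by \<open>\<S>\<close> and a nonzero fixed vector would have a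
  one-point orbit, contradicting the spanning property. Hence
  \<open>P = {x. \<forall>y \<in> \<S>a. y \<bullet> x \<le> r}\<close> is an \<open>\<S>\<close>-invariant polytope. It contains \<open>\<Omega>\<close> by the
  invariance of \<open>\<Omega>\<close>, and it contains the ball of radius \<open>r\<close> while \<open>h\<^sub>P(a) \<le> r\<close>, so
  \<open>min h\<^sub>P = r = min h\<^sub>\<Omega>\<close>. As \<open>\<Omega>\<close> is not a polytope, \<open>\<Omega> \<noteq> P\<close> and so \<open>|\<Omega>| < |P|\<close>.
\<close>

lemma unit_vector_eq_if_inner_ge_1:
  fixes v y :: "'a::real_inner"
  assumes "norm v \<le> 1" "norm y = 1" "1 \<le> y \<bullet> v"
  shows "v = y"
proof -
  have "(norm (v - y))^2 = (norm v)^2 - 2 * (y \<bullet> v) + (norm y)^2"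
    by (simp add: power2_norm_eq_inner inner_diff algebra_simps inner_commute)
  also have "\<dots> \<le> 0"
    using assms power_le_one[OF norm_ge_zero assms(1), of 2] by simp
  finally show ?thesis by simp
qed

lemma extreme_point_of_subset_unit_ball:
  fixes C :: "'a::real_inner set"
  assumes "C \<subseteq> cball 0 1" "y \<in> C" "norm y = 1"
  shows "y extreme_point_of C"
proof (rule extreme_point_of_Int_supporting_hyperplane_le)
  show "y \<bullet> x \<le> 1" if "x \<in> C" for x
    using norm_cauchy_schwarz[of y x] assms that by auto
  then show "C \<inter> {x. y \<bullet> x = 1} = {y}"
    using assms unit_vector_eq_if_inner_ge_1[of _ y] by (fastforce simp: dot_square_norm)
qed

lemma finite_if_polytope_convex_hull_unit_sphere:
  fixes X :: "'a::euclidean_space set"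
  assumes "X \<subseteq> sphere 0 1" "polytope (convex hull X)"
  shows "finite X"
proof -
  obtain V where V: "finite V" "convex hull X = convex hull V"
    using assms(2) by (auto simp: polytope_def)
  have "convex hull X \<subseteq> cball 0 1"
    using assms(1) by (intro hull_minimal) auto
  then have "y extreme_point_of (convex hull V)" if "y \<in> X" for y
    using V(2) assms(1) that by (metis extreme_point_of_subset_unit_ball hull_inc mem_sphere_0 subsetD)
  then have "X \<subseteq> V" using extreme_point_of_convex_hull by blast
  then show ?thesis using V(1) finite_subset by blast
qed

lemma barycenter_in_rel_interior_convex_hull:
  fixes X :: "'a::euclidean_space set"
  assumes "finite X" "X \<noteq> {}"
  shows "(\<Sum>y\<in>X. y) /\<^sub>R real (card X) \<in> rel_interior (convex hull X)"
  using assms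
  by (intro subsetD[OF explicit_subset_rel_interior_convex_hull_minimal[OF assms(1)]]
      CollectI exI[of _ "\<lambda>_. 1 / real (card X)"])
    (simp add: card_gt_0_iff scaleR_sum_right inverse_eq_divide)

lemma bounded_polar_halfspaces:
  fixes X :: "'a::euclidean_space set"
  assumes "0 \<in> interior (convex hull X)"
  shows "bounded {x. \<forall>y\<in>X. y \<bullet> x \<le> R}"
proof -
  obtain e where "e > 0" and e: "cball 0 e \<subseteq> convex hull X"
    using assms mem_interior_cball by blast
  have bound: "e * norm x \<le> R" if x: "\<forall>y\<in>X. y \<bullet> x \<le> R" for x
  proof -
    have "convex hull X \<subseteq> {z. x \<bullet> z \<le> R}"
      by (intro hull_minimal convex_halfspace_le) (use x in \<open>auto simp: inner_commute\<close>)
    then have ball_le: "x \<bullet> z \<le> R" if "norm z \<le> e" for z using e that by auto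
    show ?thesis
    proof (cases "x = 0")
      case True
      then show ?thesis using ball_le[of 0] \<open>e > 0\<close> by simp
    next
      case False
      then have "x \<bullet> ((e / norm x) *\<^sub>R x) \<le> R" using \<open>e > 0\<close> by (intro ball_le) simp
      then show ?thesis using False by (simp add: dot_square_norm power2_eq_square)
    qed
  qed
  show ?thesis
  proof (rule boundedI)
    fix x assume "x \<in> {x. \<forall>y\<in>X. y \<bullet> x \<le> R}"
    then have "e * norm x \<le> R" using bound by blast
    then show "norm x \<le> R / e" using \<open>e > 0\<close> by (simp add: pos_le_divide_eq mult.commute)
  qed
qed

lemma measure_lt_of_compact_psubset_convex:
  fixes A P :: "'a::euclidean_space set"
  assumes "compact A" "A \<subseteq> P" "A \<noteq> P" "convex P" "bounded P" "interior P \<noteq> {}"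
  shows "measure lebesgue A < measure lebesgue P"
proof -
  obtain x where x: "x \<in> P" "x \<notin> A" using assms(2,3) by blast
  obtain e where "e > 0" and e: "ball x e \<inter> A = {}"
    using open_contains_ball[of "- A"] assms(1) compact_imp_closed x(2)
    by (metis Compl_iff disjoint_eq_subset_Compl open_Compl)
  have "x \<in> closure (interior P)"
    using convex_closure_interior[OF assms(4,6)] x(1) closure_subset by blast
  then obtain z where z: "z \<in> interior P" "dist x z < e"
    using closure_approachable \<open>e > 0\<close> by (metis dist_commute)
  then have "z \<in> interior P \<inter> ball x e" by simp
  then obtain d where "d > 0" and d: "ball z d \<subseteq> interior P \<inter> ball x e"
    using open_contains_ball_eq[OF open_Int[OF open_interior open_ball], of z P x e] by blast
  have A: "A \<in> lmeasurable" using assms(1) lmeasurable_compact by blast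
  have B: "ball z d \<in> lmeasurable" by simp
  have "A \<inter> ball z d = {}" using d e by blast
  then have "measure lebesgue A + measure lebesgue (ball z d) = measure lebesgue (A \<union> ball z d)"
    using measure_Un3[OF A B] by simp
  moreover have "\<dots> \<le> measure lebesgue P"
    using A d assms(2) interior_subset
    by (intro measure_mono_fmeasurable) (auto simp: measurable_convex assms(4,5))
  moreover have "0 < measure lebesgue (ball z d)"
    using content_ball_pos[OF \<open>d > 0\<close>] by (simp add: measure_completion)
  ultimately show ?thesis by linarith
qed

lemma support_fun_upper:
  fixes K :: "'a::euclidean_space set"
  assumes "bounded K" "x \<in> K"
  shows "x \<bullet> u \<le> support_fun K u"
proof -
  obtain B where "\<forall>x\<in>K. norm x \<le> B" using assms(1) bounded_iff by blast
  then have "bdd_above ((\<lambda>x. x \<bullet> u) ` K)"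
    by (intro bdd_aboveI2[of _ _ "B * norm u"])
      (meson Cauchy_Schwarz_ineq2 abs_le_D1 mult_right_mono norm_ge_zero order_trans)
  then show ?thesis unfolding support_fun_def using assms(2) by (rule cSUP_upper2) simp
qed

lemma support_fun_least:
  "K \<noteq> {} \<Longrightarrow> (\<And>x. x \<in> K \<Longrightarrow> x \<bullet> u \<le> c) \<Longrightarrow> support_fun K u \<le> c"
  unfolding support_fun_def by (rule cSUP_least)

lemma support_fun_nonneg:
  "bounded K \<Longrightarrow> 0 \<in> K \<Longrightarrow> 0 \<le> support_fun K u"
  using support_fun_upper[of K 0 u] by simp

lemma radius_le_support_fun:
  fixes K :: "'a::euclidean_space set"
  assumes "bounded K" "cball 0 r \<subseteq> K" "0 \<le> r" "norm u = 1"
  shows "r \<le> support_fun K u"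
proof -
  have "r *\<^sub>R u \<in> K" using assms by auto
  then have "(r *\<^sub>R u) \<bullet> u \<le> support_fun K u" by (rule support_fun_upper[OF assms(1)])
  then show ?thesis using assms(4) by (simp add: dot_square_norm)
qed

lemma lipschitz_on_support_fun:
  fixes K :: "'a::euclidean_space set"
  assumes "K \<noteq> {}" "\<And>x. x \<in> K \<Longrightarrow> norm x \<le> B"
  shows "B-lipschitz_on A (support_fun K)"
proof (rule lipschitz_onI)
  have K: "bounded K" using assms(2) by (auto simp: bounded_iff)
  have le: "support_fun K u \<le> support_fun K v + B * norm (u - v)" for u v
  proof (rule support_fun_least[OF assms(1)])
    fix x assume x: "x \<in> K"
    have "x \<bullet> (u - v) \<le> B * norm (u - v)"
      using norm_cauchy_schwarz[of x "u - v"] assms(2)[OF x] mult_right_mono norm_ge_zero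
      by (metis order_trans)
    then show "x \<bullet> u \<le> support_fun K v + B * norm (u - v)"
      using support_fun_upper[OF K x, of v] by (simp add: inner_diff_right)
  qed
  fix u v
  show "dist (support_fun K u) (support_fun K v) \<le> B * dist u v"
    using le[of u v] le[of v u] by (simp add: dist_real_def dist_norm norm_minus_commute abs_le_iff)
  show "0 \<le> B" using assms norm_ge_zero order_trans by blast
qed

lemma continuous_on_support_fun:
  fixes K :: "'a::euclidean_space set"
  assumes "bounded K" "K \<noteq> {}"
  shows "continuous_on A (support_fun K)"
  using assms lipschitz_on_support_fun lipschitz_on_continuous_on by (metis bounded_iff)

lemma min_support_fun_sphere_attained:
  fixes K :: "'a::euclidean_space set"
  assumes "compact K" "K \<noteq> {}"
  obtains a where "norm a = 1" "(INF u\<in>sphere 0 1. support_fun K u) = support_fun K a"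
proof -
  obtain b :: 'a where "b \<in> Basis" using nonempty_Basis by blast
  then have "sphere (0::'a) 1 \<noteq> {}" by (metis norm_Basis mem_sphere_0 empty_iff)
  moreover have "continuous_on (sphere 0 1) (support_fun K)"
    using continuous_on_support_fun[OF compact_imp_bounded[OF assms(1)] assms(2)] .
  ultimately obtain a where a: "a \<in> sphere 0 1" "\<forall>u\<in>sphere 0 1. support_fun K a \<le> support_fun K u"
    using continuous_attains_inf[OF compact_sphere] by blast
  show ?thesis
  proof (rule that)
    show "norm a = 1" using a(1) by simp
    show "(INF u\<in>sphere 0 1. support_fun K u) = support_fun K a"
      using a by (intro cInf_eq_minimum) auto
  qed
qed

lemma min_support_fun_sphere_eq_radius:
  fixes K :: "'a::euclidean_space set"
  assumes "bounded K" "cball 0 r \<subseteq> K" "0 \<le> r" "norm a = 1" "support_fun K a \<le> r"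
  shows "(INF u\<in>sphere 0 1. support_fun K u) = r"
proof (rule cInf_eq_minimum)
  have "support_fun K a = r"
    using assms(5) radius_le_support_fun[OF assms(1-4)] by simp
  then show "r \<in> support_fun K ` sphere 0 1"
    using assms(4) by (metis image_eqI mem_sphere_0)
  show "r \<le> h" if "h \<in> support_fun K ` sphere 0 1" for h
    using that radius_le_support_fun[OF assms(1-3)] by auto
qed

lemma orth_subgroupD:
  assumes "orth_subgroup S" "\<phi> \<in> S"
  shows "orthogonal_transformation \<phi>" "inv \<phi> \<in> S" "\<phi> (inv \<phi> x) = x"
    "\<psi> \<in> S \<Longrightarrow> \<phi> \<circ> \<psi> \<in> S"
  using assms orthogonal_transformation_bij[of \<phi>]
  by (auto simp: orth_subgroup_def bij_is_surj surj_f_inv_f)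

lemma inner_orth_subgroup_apply:
  assumes "orth_subgroup S" "\<phi> \<in> S"
  shows "\<phi> x \<bullet> y = x \<bullet> inv \<phi> y"
proof -
  have "\<phi> x \<bullet> y = \<phi> x \<bullet> \<phi> (inv \<phi> y)"
    using orth_subgroupD(3)[OF assms] by simp
  also have "\<dots> = x \<bullet> inv \<phi> y"
    using orth_subgroupD(1)[OF assms] by (simp add: orthogonal_transformation_def)
  finally show ?thesis .
qed

lemma invariant_underI:
  assumes "orth_subgroup S" "\<And>\<phi>. \<phi> \<in> S \<Longrightarrow> \<phi> ` K \<subseteq> K"
  shows "invariant_under S K"
  unfolding invariant_under_def
proof (intro ballI equalityI)
  fix \<phi> assume \<phi>: "\<phi> \<in> S"
  show "\<phi> ` K \<subseteq> K" using assms(2)[OF \<phi>] .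
  show "K \<subseteq> \<phi> ` K"
  proof
    fix x assume "x \<in> K"
    then have "inv \<phi> x \<in> K"
      using assms(2)[OF orth_subgroupD(2)[OF assms(1) \<phi>]] by blast
    then show "x \<in> \<phi> ` K"
      using orth_subgroupD(3)[OF assms(1) \<phi>] by (metis image_eqI)
  qed
qed

definition orbit :: "('a \<Rightarrow> 'a) set \<Rightarrow> 'a \<Rightarrow> 'a set" where
  "orbit S a = (\<lambda>\<phi>. \<phi> a) ` S"

lemma spanning_propertyD:
  fixes a :: "'a::euclidean_space"
  assumes "spanning_property S" "norm a = 1"
  shows "polytope (convex hull orbit S a)" "aff_dim (convex hull orbit S a) = int DIM('a)"
proof -
  have eq: "{\<phi> a |\<phi>. \<phi> \<in> S} = orbit S a" by (auto simp: orbit_def)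
  show "polytope (convex hull orbit S a)" "aff_dim (convex hull orbit S a) = int DIM('a)"
    using spanning_property_def[THEN iffD1, OF assms(1), rule_format, OF assms(2)]
    unfolding eq by blast+
qed

lemma self_in_orbit:
  assumes "orth_subgroup S"
  shows "a \<in> orbit S a"
proof -
  have "id \<in> S" using assms by (simp add: orth_subgroup_def)
  then show ?thesis unfolding orbit_def by (metis id_apply image_eqI)
qed

lemma norm_orbit:
  "orth_subgroup S \<Longrightarrow> y \<in> orbit S a \<Longrightarrow> norm y = norm a"
  by (auto simp: orbit_def orthogonal_transformation_norm dest: orth_subgroupD(1))

lemma invariant_under_orbit:
  assumes "orth_subgroup S"
  shows "invariant_under S (orbit S a)"
proof (rule invariant_underI[OF assms])
  fix \<phi> assume "\<phi> \<in> S"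
  show "\<phi> ` orbit S a \<subseteq> orbit S a"
  proof (clarsimp simp: orbit_def)
    fix \<psi> assume "\<psi> \<in> S"
    then show "\<phi> (\<psi> a) \<in> (\<lambda>\<phi>. \<phi> a) ` S"
      using orth_subgroupD(4)[OF assms \<open>\<phi> \<in> S\<close>] by (metis comp_apply image_eqI)
  qed
qed

lemma finite_orbit:
  assumes "orth_subgroup S" "spanning_property S" "norm a = 1"
  shows "finite (orbit S a)"
  using assms norm_orbit[OF assms(1)]
  by (intro finite_if_polytope_convex_hull_unit_sphere spanning_propertyD) auto

lemma fixed_vector_eq_0_if_spanning:
  fixes c :: "'a::euclidean_space"
  assumes "orth_subgroup S" "spanning_property S" "\<And>\<phi>. \<phi> \<in> S \<Longrightarrow> \<phi> c = c"
  shows "c = 0"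
proof (rule ccontr)
  assume "c \<noteq> 0"
  define u where "u = c /\<^sub>R norm c"
  have "norm u = 1" using \<open>c \<noteq> 0\<close> by (simp add: u_def)
  have "\<phi> u = u" if "\<phi> \<in> S" for \<phi>
    using assms(3)[OF that] orth_subgroupD(1)[OF assms(1) that]
    by (simp add: u_def orthogonal_transformation_scaleR)
  then have "orbit S u = {u}"
    using self_in_orbit[OF assms(1), of u] by (auto simp: orbit_def)
  then have "aff_dim (convex hull orbit S u) = 0" by simp
  then show False using spanning_propertyD(2)[OF assms(2) \<open>norm u = 1\<close>] by simp
qed

lemma sum_orbit_eq_0:
  assumes "orth_subgroup S" "spanning_property S" "norm a = 1"
  shows "(\<Sum>y\<in>orbit S a. y) = 0"
proof (rule fixed_vector_eq_0_if_spanning[OF assms(1,2)])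
  fix \<phi> assume \<phi>: "\<phi> \<in> S"
  have "linear \<phi>" "inj \<phi>"
    using orth_subgroupD(1)[OF assms(1) \<phi>]
    by (auto simp: orthogonal_transformation_linear orthogonal_transformation_inj)
  then have "\<phi> (\<Sum>y\<in>orbit S a. y) = (\<Sum>y\<in>\<phi> ` orbit S a. y)"
    by (simp add: linear_sum sum.reindex inj_on_subset)
  also have "\<dots> = (\<Sum>y\<in>orbit S a. y)"
    using invariant_under_orbit[OF assms(1)] \<phi> by (simp add: invariant_under_def)
  finally show "\<phi> (\<Sum>y\<in>orbit S a. y) = (\<Sum>y\<in>orbit S a. y)" .
qed

lemma zero_in_interior_convex_hull_orbit:
  assumes "orth_subgroup S" "spanning_property S" "norm a = 1"
  shows "0 \<in> interior (convex hull orbit S a)"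
  using barycenter_in_rel_interior_convex_hull[OF finite_orbit[OF assms]]
    self_in_orbit[OF assms(1)] sum_orbit_eq_0[OF assms] spanning_propertyD(2)[OF assms(2,3)]
  by (auto simp: interior_rel_interior_gen)

definition orbit_polytope :: "('a::euclidean_space \<Rightarrow> 'a) set \<Rightarrow> 'a \<Rightarrow> real \<Rightarrow> 'a set" where
  "orbit_polytope S a R = {x. \<forall>y\<in>orbit S a. y \<bullet> x \<le> R}"

lemma polytope_orbit_polytope:
  assumes "orth_subgroup S" "spanning_property S" "norm a = 1"
  shows "polytope (orbit_polytope S a R)"
proof -
  have "orbit_polytope S a R = (\<Inter>y\<in>orbit S a. {x. y \<bullet> x \<le> R})"
    by (auto simp: orbit_polytope_def)
  then have "polyhedron (orbit_polytope S a R)"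
    using finite_orbit[OF assms] by (auto intro!: polyhedron_Inter simp: polyhedron_halfspace_le)
  moreover have "bounded (orbit_polytope S a R)"
    unfolding orbit_polytope_def
    by (rule bounded_polar_halfspaces[OF zero_in_interior_convex_hull_orbit[OF assms]])
  ultimately show ?thesis by (simp add: polytope_eq_bounded_polyhedron)
qed

lemma invariant_under_orbit_polytope:
  assumes "orth_subgroup S"
  shows "invariant_under S (orbit_polytope S a R)"
proof (rule invariant_underI[OF assms])
  fix \<phi> assume \<phi>: "\<phi> \<in> S"
  have "inv \<phi> y \<in> orbit S a" if "y \<in> orbit S a" for y
    using that invariant_under_orbit[OF assms] orth_subgroupD(2)[OF assms \<phi>]
    by (auto simp: invariant_under_def)
  moreover have "y \<bullet> \<phi> x = inv \<phi> y \<bullet> x" for x y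
    by (metis inner_commute inner_orth_subgroup_apply[OF assms \<phi>])
  ultimately show "\<phi> ` orbit_polytope S a R \<subseteq> orbit_polytope S a R"
    by (auto simp: orbit_polytope_def)
qed

lemma cball_subset_orbit_polytope:
  assumes "orth_subgroup S" "norm a = 1"
  shows "cball 0 R \<subseteq> orbit_polytope S a R"
proof (clarsimp simp: orbit_polytope_def)
  fix x y :: 'a assume "norm x \<le> R" "y \<in> orbit S a"
  then show "y \<bullet> x \<le> R"
    using norm_cauchy_schwarz[of y x] norm_orbit[OF assms(1)] assms(2) by simp
qed

lemma subset_orbit_polytope:
  assumes "orth_subgroup S" "invariant_under S K" "bounded K" "support_fun K a \<le> R"
  shows "K \<subseteq> orbit_polytope S a R"
proof (clarsimp simp: orbit_polytope_def orbit_def)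
  fix x \<phi> assume "x \<in> K" "\<phi> \<in> S"
  then have "inv \<phi> x \<in> K"
    using assms(2) orth_subgroupD(2)[OF assms(1)] by (auto simp: invariant_under_def)
  then have "inv \<phi> x \<bullet> a \<le> R"
    using support_fun_upper[OF assms(3)] assms(4) order_trans by blast
  then show "\<phi> a \<bullet> x \<le> R"
    by (metis inner_commute inner_orth_subgroup_apply[OF assms(1) \<open>\<phi> \<in> S\<close>])
qed

lemma min_support_fun_orbit_polytope:
  assumes "orth_subgroup S" "spanning_property S" "norm a = 1" "0 \<le> R"
  shows "(INF u\<in>sphere 0 1. support_fun (orbit_polytope S a R) u) = R"
proof (rule min_support_fun_sphere_eq_radius)
  show "bounded (orbit_polytope S a R)"
    using polytope_orbit_polytope[OF assms(1-3)] polytope_imp_bounded by blast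
  show cball: "cball 0 R \<subseteq> orbit_polytope S a R"
    using cball_subset_orbit_polytope[OF assms(1,3)] .
  show "support_fun (orbit_polytope S a R) a \<le> R"
  proof (rule support_fun_least)
    show "orbit_polytope S a R \<noteq> {}" using cball assms(4) by auto
    show "x \<bullet> a \<le> R" if "x \<in> orbit_polytope S a R" for x
      using that self_in_orbit[OF assms(1)] by (auto simp: orbit_polytope_def inner_commute)
  qed
qed (use assms in auto)

theorem lemma4p3:
  fixes S :: "('a::euclidean_space \<Rightarrow> 'a) set" and \<Omega> :: "'a set"
  assumes "DIM('a) \<ge> 2"
    and "orth_subgroup S" and "discrete_maps S" and "spanning_property S"
    and "\<Omega> \<in> K0 S" and "\<not> polytope \<Omega>"
  shows "\<exists>P. polytope P \<and> invariant_under S P \<and> \<Omega> \<subseteq> P \<and> F_minf \<Omega> < F_minf P"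
proof -
  have \<Omega>: "compact \<Omega>" "bounded \<Omega>" "0 \<in> \<Omega>" "invariant_under S \<Omega>"
    using assms(5) by (auto simp: K0_def convex_body_def compact_imp_bounded)
  obtain a where a: "norm a = 1" and min_\<Omega>: "(INF u\<in>sphere 0 1. support_fun \<Omega> u) = support_fun \<Omega> a"
    using min_support_fun_sphere_attained \<Omega>(1,3) by blast
  let ?r = "support_fun \<Omega> a"
  have "0 \<le> ?r" using support_fun_nonneg[OF \<Omega>(2,3)] .
  \<comment> \<open>If \<open>?r = 0\<close> then \<open>F_minf \<Omega> = 0\<close> by division by zero, and any radius will do.\<close>
  define R where "R = (if ?r > 0 then ?r else 1)"
  then have R: "0 < R" "?r \<le> R" using \<open>0 \<le> ?r\<close> by auto
  define P where "P = orbit_polytope S a R"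
  have P: "polytope P" "invariant_under S P" "\<Omega> \<subseteq> P"
    using polytope_orbit_polytope[OF assms(2,4) a] invariant_under_orbit_polytope[OF assms(2)]
      subset_orbit_polytope[OF assms(2) \<Omega>(4,2) R(2)] by (auto simp: P_def)
  have "0 \<in> interior P"
    using cball_subset_orbit_polytope[OF assms(2) a] \<open>R > 0\<close> mem_interior_cball
    unfolding P_def by blast
  have min_P: "(INF u\<in>sphere 0 1. support_fun P u) = R"
    unfolding P_def using min_support_fun_orbit_polytope[OF assms(2,4) a] R by simp
  have vol: "measure lebesgue \<Omega> < measure lebesgue P"
    using P \<open>0 \<in> interior P\<close> \<Omega>(1) assms(6)
    by (intro measure_lt_of_compact_psubset_convex) (auto simp: polytope_imp_convex polytope_imp_bounded)
  have "F_minf \<Omega> < F_minf P"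
  proof (cases "?r > 0")
    case True
    then show ?thesis
      using vol min_\<Omega> min_P by (simp add: F_minf_def Vol_def R_def divide_strict_right_mono)
  next
    case False
    then have "?r = 0" using \<open>0 \<le> ?r\<close> by simp
    moreover have "0 < measure lebesgue P" using vol measure_nonneg[of lebesgue \<Omega>] by linarith
    ultimately show ?thesis
      using False min_\<Omega> min_P by (simp add: F_minf_def Vol_def R_def power_0_left)
  qed
  then show ?thesis using P by blast
qed

end
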